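(* Suppose $|\langle\Theta\rangle|$ divides $\alpha$ and $|\langle\theta\rangle|$ divides $\beta$. Let $\mathcal{C}=\mathcal{C}'\otimes\mathscr{C}$ be an $\mathbb{F}_q\mathcal{R}$-skew cyclic code of length $(\alpha,\beta)$, where $\mathcal{C}'=\langle f(x)\rangle$ is a skew cyclic code of length $\alpha$ over $\mathbb{F}_q$ and $\mathscr{C}=\xi_1\mathcal{C}_1\oplus\xi_2\mathcal{C}_2=\langle g(x)\rangle$ is a skew cyclic code of length $\beta$ over $\mathcal{R}$ with $g(x)=\xi_1g_1(x)+\xi_2g_2(x)$, $\mathcal{C}_i=\langle g_i(x)\rangle$ skew cyclic codes of length $\beta$ over $\mathbb{F}_q$, and $x^\alpha-1=h(x)f(x)$, $x^\beta-1=h_i(x)g_i(x)$ in $\mathbb{F}_q[x;\Theta]$ for $i=1,2$. Then $\mathcal{C}^\perp\subseteq\mathcal{C}$ if and only if $h^\dagger(x)h(x)$ is divisible by $x^\alpha-1$ from the right side and $h_i^\dagger(x)h_i(x)$ is divisible by $x^\beta-1$ from the right side for $i=1,2$.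
   Context: Let $p$ be a prime, $q=p^m$, $\mathcal{R}=\mathbb{F}_q[u]/\langle u^2-u\rangle$, $\xi_1=1-u$, $\xi_2=u$. Fix $i$; $\Theta(a)=a^{p^i}$ on $\mathbb{F}_q$, $\theta(a+ub)=a^{p^i}+ub^{p^i}$ on $\mathcal{R}$, $\eta(a+ub)=a$; $|\langle\cdot\rangle|$ denotes the order of an automorphism. $\mathbb{F}_q[x;\Theta]$ is the skew polynomial ring with $(ax^i)(bx^j)=a\Theta^i(b)x^{i+j}$ (similarly $\mathcal{R}[x;\theta]$). A skew cyclic code of length $n$ over $\mathbb{F}_q$ is a linear code closed under $(c_0,\dots,c_{n-1})\mapsto(\Theta(c_{n-1}),\Theta(c_0),\dots,\Theta(c_{n-2}))$; identifying vectors with polynomials, it is the left submodule $\langle g(x)\rangle$ of $\mathbb{F}_q[x;\Theta]/\langle x^n-1\rangle$ generated by a right divisor $g$ of $x^n-1$. Skew cyclic codes over $\mathcal{R}$ are defined analogously with $\theta$. An $\mathbb{F}_q\mathcal{R}$-skew cyclic code of length $(\alpha,\beta)$ is an $\mathcal{R}$-submodule of $\mathbb{F}_q^\alpha\times\mathcal{R}^\beta$ (with $s*(x,y)=(\eta(s)x,sy)$ componentwise) closed under $\sigma(x_0,\dots,x_{\alpha-1},y_0,\dots,y_{\beta-1})=(\Theta(x_{\alpha-1}),\Theta(x_0),\dots,\Theta(x_{\alpha-2}),\theta(y_{\beta-1}),\theta(y_0),\dots,\theta(y_{\beta-2}))$; $A\otimes B=\{(a,b):a\in A,b\in B\}$.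 $\mathcal{C}^\perp$ is the dual with respect to $l\cdot l'=u\sum_{i=0}^{\alpha-1}x_ix'_i+\sum_{j=0}^{\beta-1}y_jy'_j$. For $h(x)=h_0+h_1x+\dots+h_sx^s$, $h^\dagger(x)=h_s+\Theta(h_{s-1})x+\dots+\Theta^s(h_0)x^s$. "$a(x)$ divisible by $b(x)$ from the right side" means $a(x)=c(x)b(x)$ for some $c(x)$ in the skew polynomial ring. *)

theory Defs
  imports "HOL-Computational_Algebra.Polynomial"
begin

text \<open>RQ a b represents the element a + u b of R (u^2 = u).\<close>
datatype 'a rq = RQ 'a 'a

fun rq_fst :: "'a rq \<Rightarrow> 'a" where "rq_fst (RQ a b) = a"
fun rq_snd :: "'a rq \<Rightarrow> 'a" where "rq_snd (RQ a b) = b"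

lemma rq_eq_iff: "x = y \<longleftrightarrow> rq_fst x = rq_fst y \<and> rq_snd x = rq_snd y"
  by (cases x; cases y) auto

instantiation rq :: (comm_ring_1) comm_ring_1
begin
definition "0 = RQ 0 0"
definition "1 = RQ 1 0"
definition "x + y = RQ (rq_fst x + rq_fst y) (rq_snd x + rq_snd y)"
definition "x - y = RQ (rq_fst x - rq_fst y) (rq_snd x - rq_snd y)"
definition "- x = RQ (- rq_fst x) (- rq_snd x)"
definition "x * y = RQ (rq_fst x * rq_fst y)
   (rq_fst x * rq_snd y + rq_snd x * rq_fst y + rq_snd x * rq_snd y)"
instance
  by standard (auto simp: rq_eq_iff zero_rq_def one_rq_def plus_rq_def minus_rq_def
      uminus_rq_def times_rq_def algebra_simps)
end

definition u_R :: "'a::comm_ring_1 rq" where "u_R = RQ 0 1"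
definition xi1 :: "'a::comm_ring_1 rq" where "xi1 = 1 - u_R"
definition xi2 :: "'a::comm_ring_1 rq" where "xi2 = u_R"

definition emb_R :: "'a::comm_ring_1 \<Rightarrow> 'a rq" where "emb_R a = RQ a 0"
definition eta :: "'a rq \<Rightarrow> 'a" where "eta = rq_fst"

definition Theta :: "nat \<Rightarrow> 'a::{field,finite} \<Rightarrow> 'a" where
  "Theta i a = a ^ (CHAR('a) ^ i)"

definition thetaR :: "('a \<Rightarrow> 'a) \<Rightarrow> 'a rq \<Rightarrow> 'a rq" where
  "thetaR T x = RQ (T (rq_fst x)) (T (rq_snd x))"

definition aut_ord :: "('b \<Rightarrow> 'b) \<Rightarrow> nat" where
  "aut_ord T = (LEAST k. 0 < k \<and> T ^^ k = id)"

text \<open>Skew polynomials are represented by their coefficient sequences (type 'b poly);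
  multiplication follows (a x^i)(b x^j) = a T^i(b) x^(i+j).\<close>
definition skew_mult :: "('b::comm_ring_1 \<Rightarrow> 'b) \<Rightarrow> 'b poly \<Rightarrow> 'b poly \<Rightarrow> 'b poly" where
  "skew_mult T f g = (\<Sum>i\<le>degree f. \<Sum>j\<le>degree g. monom (coeff f i * (T ^^ i) (coeff g j)) (i + j))"

definition xn_minus_1 :: "nat \<Rightarrow> 'b::comm_ring_1 poly" where
  "xn_minus_1 n = monom 1 n - 1"

definition right_dvd :: "('b::comm_ring_1 \<Rightarrow> 'b) \<Rightarrow> 'b poly \<Rightarrow> 'b poly \<Rightarrow> bool" where
  "right_dvd T b a \<longleftrightarrow> (\<exists>c. a = skew_mult T c b)"

definition dagger :: "('b::comm_ring_1 \<Rightarrow> 'b) \<Rightarrow> 'b poly \<Rightarrow> 'b poly" where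
  "dagger T h = (\<Sum>k\<le>degree h. monom ((T ^^ k) (coeff h (degree h - k))) k)"

text \<open>Vectors of length n are identified with polynomials of degree < n.\<close>
definition vecs :: "nat \<Rightarrow> 'b::zero poly set" where
  "vecs n = {c. \<forall>k\<ge>n. coeff c k = 0}"

text \<open>The left submodule generated by (the class of) g in T-skew polynomials modulo
  x^n - 1, each residue class represented by its representative of degree < n.\<close>
definition skew_gen_code :: "('b::comm_ring_1 \<Rightarrow> 'b) \<Rightarrow> nat \<Rightarrow> 'b poly \<Rightarrow> 'b poly set" where
  "skew_gen_code T n g = {c \<in> vecs n. \<exists>a b. c = skew_mult T a g + skew_mult T b (xn_minus_1 n)}"

definition skew_shift :: "('b::comm_ring_1 \<Rightarrow> 'b) \<Rightarrow> nat \<Rightarrow> 'b poly \<Rightarrow> 'b poly" where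
  "skew_shift T n c = (\<Sum>k<n. monom (T (coeff c ((k + n - 1) mod n))) k)"

definition xi_sum :: "'a::comm_ring_1 poly set \<Rightarrow> 'a poly set \<Rightarrow> 'a rq poly set" where
  "xi_sum C1 C2 = {smult xi1 (map_poly emb_R c1) + smult xi2 (map_poly emb_R c2) | c1 c2.
       c1 \<in> C1 \<and> c2 \<in> C2}"

definition amb :: "nat \<Rightarrow> nat \<Rightarrow> ('a::comm_ring_1 poly \<times> 'a rq poly) set" where
  "amb \<alpha> \<beta> = vecs \<alpha> \<times> vecs \<beta>"

definition tensor :: "'x set \<Rightarrow> 'y set \<Rightarrow> ('x \<times> 'y) set" where
  "tensor A B = {(a, b). a \<in> A \<and> b \<in> B}"

definition FqR_smul :: "'a::comm_ring_1 rq \<Rightarrow> ('a poly \<times> 'a rq poly) \<Rightarrow> ('a poly \<times> 'a rq poly)" where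
  "FqR_smul s l = (smult (eta s) (fst l), smult s (snd l))"

definition FqR_sigma :: "('a::comm_ring_1 \<Rightarrow> 'a) \<Rightarrow> nat \<Rightarrow> nat \<Rightarrow>
    ('a poly \<times> 'a rq poly) \<Rightarrow> ('a poly \<times> 'a rq poly)" where
  "FqR_sigma T \<alpha> \<beta> l = (skew_shift T \<alpha> (fst l), skew_shift (thetaR T) \<beta> (snd l))"

definition FqR_skew_cyclic :: "('a::comm_ring_1 \<Rightarrow> 'a) \<Rightarrow> nat \<Rightarrow> nat \<Rightarrow>
    ('a poly \<times> 'a rq poly) set \<Rightarrow> bool" where
  "FqR_skew_cyclic T \<alpha> \<beta> C \<longleftrightarrow>
     C \<subseteq> amb \<alpha> \<beta> \<and> (0, 0) \<in> C \<and>
     (\<forall>l\<in>C. \<forall>l'\<in>C. (fst l + fst l', snd l + snd l') \<in> C) \<and>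
     (\<forall>s. \<forall>l\<in>C. FqR_smul s l \<in> C) \<and>
     (\<forall>l\<in>C. FqR_sigma T \<alpha> \<beta> l \<in> C)"

definition FqR_inner :: "nat \<Rightarrow> nat \<Rightarrow> ('a::comm_ring_1 poly \<times> 'a rq poly) \<Rightarrow>
    ('a poly \<times> 'a rq poly) \<Rightarrow> 'a rq" where
  "FqR_inner \<alpha> \<beta> l l' =
     u_R * emb_R (\<Sum>i<\<alpha>. coeff (fst l) i * coeff (fst l') i)
     + (\<Sum>j<\<beta>. coeff (snd l) j * coeff (snd l') j)"

definition FqR_dual :: "nat \<Rightarrow> nat \<Rightarrow> ('a::comm_ring_1 poly \<times> 'a rq poly) set \<Rightarrow>
    ('a poly \<times> 'a rq poly) set" where
  "FqR_dual \<alpha> \<beta> C = {l \<in> amb \<alpha> \<beta>. \<forall>l'\<in>C. FqR_inner \<alpha> \<beta> l l' = 0}"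

end

theory Submission
  imports Defs "HOL-Computational_Algebra.Primes"
begin

(* If Theta^n = id then x^n - 1 is central in F_q[x; Theta], so x^n - 1 = h g forces g h = x^n - 1
   as well. Reading off the coefficients of g h below x^n shows that every left multiple b h\<dagger>
   with deg b < n - deg h is orthogonal to every codeword a g. Conversely, a vector orthogonal to
   <g> vanishes as soon as its first n - deg h coefficients do, and over a finite field these
   coefficients can be matched by some b h\<dagger>. Hence <g>\<^sup>\<bottom> = {b h\<dagger>}, so <g>\<^sup>\<bottom> \<subseteq> <g> iff h\<dagger> is
   a left multiple of g, iff h\<dagger> h is a left multiple of g h = x^n - 1.
   For the mixed code, the factor u in the inner product loses nothing on the F_q-part, so the
   dual of C' \<otimes> C_R is C'\<^sup>\<bottom> \<otimes> C_R\<^sup>\<bottom>; and R \<cong> F_q \<times> F_q splits C_R\<^sup>\<bottom> as xi1 C1\<^sup>\<bottom> \<oplus> xi2 C2\<^sup>\<bottom>. *)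

definition dot :: "nat \<Rightarrow> 'a::comm_ring_1 poly \<Rightarrow> 'a poly \<Rightarrow> 'a" where
  "dot n c d = (\<Sum>k<n. coeff c k * coeff d k)"

definition dual :: "nat \<Rightarrow> 'a::comm_ring_1 poly set \<Rightarrow> 'a poly set" where
  "dual n C = {c \<in> vecs n. \<forall>c'\<in>C. dot n c c' = 0}"

lemma in_vecs_iff: "c \<in> vecs m \<longleftrightarrow> c = 0 \<or> degree c < m"
proof
  assume "c \<in> vecs m"
  then have "coeff c (degree c) = 0" if "m \<le> degree c"
    using that by (simp add: vecs_def)
  then show "c = 0 \<or> degree c < m"
    by (meson leading_coeff_0_iff not_le)
qed (auto simp: vecs_def coeff_eq_0)

lemma zero_in_vecs [simp]: "0 \<in> vecs m"
  by (simp add: vecs_def)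

lemma vecs_0: "vecs 0 = {0}"
  by (auto simp: in_vecs_iff)

lemma diff_in_vecs: "c \<in> vecs m \<Longrightarrow> d \<in> vecs m \<Longrightarrow> c - d \<in> vecs m"
  by (simp add: vecs_def)

lemma poly_cutoff_in_vecs: "poly_cutoff m c \<in> vecs m"
  by (simp add: vecs_def coeff_poly_cutoff)

lemma sum_monoms_vecs: "c \<in> vecs m \<Longrightarrow> (\<Sum>k<m. monom (coeff c k) k) = c"
  by (rule poly_eqI) (auto simp: coeff_sum coeff_monom vecs_def)

lemma finite_vecs: "finite (vecs m :: 'a::{zero,finite} poly set)"
proof -
  have "vecs m \<subseteq> Poly ` {xs :: 'a list. length xs = m}"
  proof
    fix c :: "'a poly"
    assume "c \<in> vecs m"
    then have "c = Poly (map (coeff c) [0..<m])"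
      by (intro poly_eqI) (auto simp: nth_default_def vecs_def)
    then show "c \<in> Poly ` {xs. length xs = m}"
      by (intro image_eqI) auto
  qed
  then show ?thesis
    using finite_lists_length_eq[OF finite_UNIV, of m] by (auto intro: finite_subset)
qed

lemma zero_in_dual: "0 \<in> dual n C"
  by (simp add: dual_def dot_def)

lemma dot_diff_left: "dot n (c - d) e = dot n c e - dot n d e"
  by (simp add: dot_def sum_subtractf algebra_simps)

lemma dot_sum_left: "dot n (sum F A) e = (\<Sum>x\<in>A. dot n (F x) e)"
  unfolding dot_def coeff_sum sum_distrib_right by (rule sum.swap)

lemma dot_sum_right: "dot n e (sum F A) = (\<Sum>x\<in>A. dot n e (F x))"
  unfolding dot_def coeff_sum sum_distrib_left by (rule sum.swap)

lemma dot_smult_left: "dot n (smult a c) e = a * dot n c e"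
  by (simp add: dot_def sum_distrib_left mult.assoc)

lemma dot_smult_right: "dot n e (smult a c) = a * dot n e c"
  by (simp add: dot_def sum_distrib_left algebra_simps)


section \<open>Ring endomorphisms and skew polynomial multiplication\<close>

locale ring_endo =
  fixes T :: "'a::comm_ring_1 \<Rightarrow> 'a"
  assumes add: "T (a + b) = T a + T b"
    and mult: "T (a * b) = T a * T b"
    and one: "T 1 = 1"
begin

lemma zero: "T 0 = 0"
  using add[of 0 0] by simp

lemma minus: "T (- a) = - T a"
  using add[of a "- a"] by (simp add: zero eq_neg_iff_add_eq_0 add.commute)

lemma diff: "T (a - b) = T a - T b"
  using add[of a "- b"] by (simp add: minus)

lemma sum: "T (sum f A) = (\<Sum>x\<in>A. T (f x))"
  by (induction A rule: infinite_finite_induct) (simp_all add: zero add)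

lemma funpow: "ring_endo (T ^^ n)"
proof
  show "(T ^^ n) (a + b) = (T ^^ n) a + (T ^^ n) b" for a b
    by (induction n) (simp_all add: add)
  show "(T ^^ n) (a * b) = (T ^^ n) a * (T ^^ n) b" for a b
    by (induction n) (simp_all add: mult)
  show "(T ^^ n) 1 = 1"
    by (induction n) (simp_all add: one)
qed

lemmas iter_add = ring_endo.add[OF funpow]
  and iter_mult = ring_endo.mult[OF funpow]
  and iter_one = ring_endo.one[OF funpow]
  and iter_zero = ring_endo.zero[OF funpow]
  and iter_minus = ring_endo.minus[OF funpow]
  and iter_sum = ring_endo.sum[OF funpow]

lemma coeff_skew_mult:
  "coeff (skew_mult T f g) k = (\<Sum>i\<le>k. coeff f i * (T ^^ i) (coeff g (k - i)))"
proof -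
  define F where "F i = coeff f i * (T ^^ i) (coeff g (k - i))" for i
  have inner: "(\<Sum>j\<le>degree g. if i + j = k then coeff f i * (T ^^ i) (coeff g j) else 0)
      = (if i \<le> k then F i else 0)" for i
  proof -
    have "(\<Sum>j\<le>degree g. if i + j = k then coeff f i * (T ^^ i) (coeff g j) else 0)
        = (\<Sum>j\<le>degree g. if j = k - i then (if i \<le> k then F i else 0) else 0)"
      by (intro sum.cong) (auto simp: F_def)
    also have "\<dots> = (if i \<le> k then F i else 0)"
      by (auto simp: F_def coeff_eq_0 iter_zero)
    finally show ?thesis .
  qed
  have "coeff (skew_mult T f g) k = (\<Sum>i\<le>degree f. if i \<le> k then F i else 0)"
    unfolding skew_mult_def coeff_sum coeff_monom by (intro sum.cong refl inner)
  also have "\<dots> = (\<Sum>i\<le>max k (degree f). if i \<le> k then F i else 0)"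
    by (rule sum.mono_neutral_left) (auto simp: F_def coeff_eq_0)
  also have "\<dots> = (\<Sum>i\<le>k. F i)"
    by (subst sum.mono_neutral_right[of _ "{..k}"]) auto
  finally show ?thesis
    by (simp add: F_def)
qed

lemma skew_mult_add_left: "skew_mult T (f + g) h = skew_mult T f h + skew_mult T g h"
  by (rule poly_eqI) (simp add: coeff_skew_mult distrib_right sum.distrib)

lemma skew_mult_add_right: "skew_mult T f (g + h) = skew_mult T f g + skew_mult T f h"
  by (rule poly_eqI) (simp add: coeff_skew_mult iter_add distrib_left sum.distrib)

lemma skew_mult_minus_left: "skew_mult T (- f) g = - skew_mult T f g"
  by (rule poly_eqI) (simp add: coeff_skew_mult sum_negf)

lemma skew_mult_minus_right: "skew_mult T f (- g) = - skew_mult T f g"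
  by (rule poly_eqI) (simp add: coeff_skew_mult iter_minus sum_negf)

lemma skew_mult_diff_left: "skew_mult T (f - g) h = skew_mult T f h - skew_mult T g h"
  using skew_mult_add_left[of f "- g" h] by (simp add: skew_mult_minus_left)

lemma skew_mult_diff_right: "skew_mult T f (g - h) = skew_mult T f g - skew_mult T f h"
  using skew_mult_add_right[of f g "- h"] by (simp add: skew_mult_minus_right)

lemma skew_mult_0_left [simp]: "skew_mult T 0 f = 0"
  by (rule poly_eqI) (simp add: coeff_skew_mult)

lemma skew_mult_0_right [simp]: "skew_mult T f 0 = 0"
  by (rule poly_eqI) (simp add: coeff_skew_mult iter_zero)

lemma zero_in_skew_gen_code: "0 \<in> skew_gen_code T n p"
  unfolding skew_gen_code_def by (auto intro!: exI[of _ 0])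

lemma skew_mult_sum_left: "skew_mult T (sum F A) g = (\<Sum>x\<in>A. skew_mult T (F x) g)"
  by (induction A rule: infinite_finite_induct) (simp_all add: skew_mult_add_left)

lemma skew_mult_sum_right: "skew_mult T g (sum F A) = (\<Sum>x\<in>A. skew_mult T g (F x))"
  by (induction A rule: infinite_finite_induct) (simp_all add: skew_mult_add_right)

lemma coeff_skew_mult_monom_left:
  "coeff (skew_mult T (monom a l) f) k = (if l \<le> k then a * (T ^^ l) (coeff f (k - l)) else 0)"
proof -
  have "coeff (skew_mult T (monom a l) f) k
      = (\<Sum>i\<le>k. if i = l then a * (T ^^ l) (coeff f (k - l)) else 0)"
    unfolding coeff_skew_mult by (rule sum.cong) (auto simp: coeff_monom)
  then show ?thesis
    by simp
qed

lemma coeff_skew_mult_monom_right: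
  "coeff (skew_mult T f (monom b j)) k = (if j \<le> k then coeff f (k - j) * (T ^^ (k - j)) b else 0)"
proof -
  have "coeff (skew_mult T f (monom b j)) k
      = (\<Sum>i\<le>k. if i = k - j \<and> j \<le> k then coeff f (k - j) * (T ^^ (k - j)) b else 0)"
    unfolding coeff_skew_mult by (rule sum.cong) (auto simp: coeff_monom iter_zero)
  then show ?thesis
    by simp
qed

lemma skew_mult_monom_monom:
  "skew_mult T (monom a i) (monom b j) = monom (a * (T ^^ i) b) (i + j)"
  by (rule poly_eqI) (auto simp: coeff_skew_mult_monom_left coeff_monom iter_zero)

lemma skew_mult_monom_eq_smult:
  "skew_mult T (monom a l) f = smult a (skew_mult T (monom 1 l) f)"
  by (rule poly_eqI) (simp add: coeff_skew_mult_monom_left)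

lemma skew_mult_1_left [simp]: "skew_mult T 1 f = f"
  by (rule poly_eqI) (simp add: coeff_skew_mult_monom_left flip: monom_eq_1)

lemma skew_mult_1_right [simp]: "skew_mult T f 1 = f"
  by (rule poly_eqI) (simp add: coeff_skew_mult_monom_right iter_one flip: monom_eq_1)

lemma skew_mult_assoc: "skew_mult T (skew_mult T f g) h = skew_mult T f (skew_mult T g h)"
proof -
  let ?M = "\<lambda>p. \<Sum>i\<le>degree p. monom (coeff p i) i"
  have "skew_mult T (skew_mult T (?M f) (?M g)) (?M h) = skew_mult T (?M f) (skew_mult T (?M g) (?M h))"
    by (simp add: skew_mult_sum_left skew_mult_sum_right skew_mult_monom_monom iter_mult
        mult.assoc add.assoc flip: funpow_add[THEN fun_cong, unfolded o_apply])
  then show ?thesis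
    by (simp only: poly_as_sum_of_monoms)
qed

lemma coeff_skew_mult_above_degree:
  assumes "degree f + degree g < k"
  shows "coeff (skew_mult T f g) k = 0"
  unfolding coeff_skew_mult
proof (intro sum.neutral ballI)
  fix i
  show "coeff f i * (T ^^ i) (coeff g (k - i)) = 0"
  proof (cases "i \<le> degree f")
    case True
    then have "coeff g (k - i) = 0"
      using assms by (intro coeff_eq_0) linarith
    then show ?thesis
      by (simp add: iter_zero)
  qed (simp add: coeff_eq_0)
qed

lemma coeff_skew_mult_degree_sum:
  "coeff (skew_mult T f g) (degree f + degree g) = lead_coeff f * (T ^^ degree f) (lead_coeff g)"
proof -
  have "coeff f i * (T ^^ i) (coeff g (degree f + degree g - i))
      = (if i = degree f then lead_coeff f * (T ^^ degree f) (lead_coeff g) else 0)" for i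
  proof (cases "i < degree f")
    case True
    then have "coeff g (degree f + degree g - i) = 0"
      by (intro coeff_eq_0) linarith
    with True show ?thesis
      by (simp add: iter_zero)
  qed (auto simp: coeff_eq_0)
  then show ?thesis
    by (simp add: coeff_skew_mult)
qed

lemma coeff_skew_mult_lowest:
  assumes "\<forall>i<k. coeff d i = 0"
  shows "coeff (skew_mult T d e) k = coeff d k * (T ^^ k) (coeff e 0)"
proof -
  have "coeff (skew_mult T d e) k = (\<Sum>i\<le>k. if i = k then coeff d k * (T ^^ k) (coeff e 0) else 0)"
    unfolding coeff_skew_mult by (rule sum.cong) (use assms in auto)
  then show ?thesis
    by simp
qed

lemma skew_mult_in_vecs:
  assumes "a \<in> vecs k" and "degree p + k \<le> n"
  shows "skew_mult T a p \<in> vecs n"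
proof (cases "a = 0")
  case False
  with assms(1) have "degree a < k"
    by (simp add: in_vecs_iff)
  with assms(2) show ?thesis
    by (auto simp: vecs_def intro!: coeff_skew_mult_above_degree)
qed (simp add: vecs_def)

lemma skew_mult_monom_commute:
  assumes "T ^^ n = id"
  shows "skew_mult T (monom 1 n) a = skew_mult T a (monom 1 n)"
  by (rule poly_eqI) (simp add: coeff_skew_mult_monom_left coeff_skew_mult_monom_right assms iter_one)

lemma skew_mult_xn_minus_1_commute:
  assumes "T ^^ n = id"
  shows "skew_mult T (xn_minus_1 n) a = skew_mult T a (xn_minus_1 n)"
  unfolding xn_minus_1_def
  by (simp add: skew_mult_diff_left skew_mult_diff_right skew_mult_monom_commute[OF assms])

end

lemma coeff_dagger:
  "coeff (dagger T h) k = (if k \<le> degree h then (T ^^ k) (coeff h (degree h - k)) else 0)"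
  by (simp add: dagger_def coeff_sum coeff_monom)

locale field_endo = ring_endo T for T :: "'a::field \<Rightarrow> 'a"
begin

lemma eq_0_iff: "T a = 0 \<longleftrightarrow> a = 0"
proof
  assume "T a = 0"
  show "a = 0"
  proof (rule ccontr)
    assume "a \<noteq> 0"
    then have "T a * T (inverse a) = 1"
      by (simp add: one flip: mult)
    with \<open>T a = 0\<close> show False
      by simp
  qed
qed (simp add: zero)

lemma inj: "inj T"
proof (rule injI)
  fix a b
  assume "T a = T b"
  then have "T (a - b) = 0"
    by (simp add: diff)
  then show "a = b"
    by (simp add: eq_0_iff)
qed

lemmas iter_eq_0_iff = field_endo.eq_0_iff[OF field_endo.intro[OF funpow]]

lemma degree_skew_mult:
  assumes "f \<noteq> 0" and "g \<noteq> 0"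
  shows "degree (skew_mult T f g) = degree f + degree g"
proof (rule antisym)
  show "degree (skew_mult T f g) \<le> degree f + degree g"
    by (rule degree_le) (auto intro: coeff_skew_mult_above_degree)
  show "degree f + degree g \<le> degree (skew_mult T f g)"
    using assms by (intro le_degree) (simp add: coeff_skew_mult_degree_sum iter_eq_0_iff)
qed

lemma skew_mult_eq_0_iff: "skew_mult T f g = 0 \<longleftrightarrow> f = 0 \<or> g = 0"
proof -
  have "coeff (skew_mult T f g) (degree f + degree g) \<noteq> 0" if "f \<noteq> 0" "g \<noteq> 0"
    using that by (simp add: coeff_skew_mult_degree_sum iter_eq_0_iff)
  then show ?thesis
    by (metis coeff_0 skew_mult_0_left skew_mult_0_right)
qed

lemma skew_mult_right_cancel:
  assumes "g \<noteq> 0" and "skew_mult T a g = skew_mult T b g"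
  shows "a = b"
proof -
  have "skew_mult T (a - b) g = 0"
    using assms(2) by (simp add: skew_mult_diff_left)
  with assms(1) show ?thesis
    by (simp add: skew_mult_eq_0_iff)
qed

lemma left_multiple_of_constant:
  assumes "degree g = 0" and "g \<noteq> 0"
  shows "p = skew_mult T (skew_mult T p [:inverse (coeff g 0):]) g"
proof -
  have "g = [:coeff g 0:]" and "coeff g 0 \<noteq> 0"
    using assms leading_coeff_0_iff[of g] by (simp_all add: degree_0_id)
  then have "skew_mult T [:inverse (coeff g 0):] g = 1"
    using skew_mult_monom_monom[of "inverse (coeff g 0)" 0 "coeff g 0" 0]
    by (simp add: monom_0)
  then show ?thesis
    by (simp add: skew_mult_assoc)
qed

lemma cutoff_skew_mult_eq_0_imp_eq_0:
  assumes "coeff e 0 \<noteq> 0" and "b \<in> vecs m" and "poly_cutoff m (skew_mult T b e) = 0"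
  shows "b = 0"
proof (rule ccontr)
  assume "b \<noteq> 0"
  then obtain k where k: "coeff b k \<noteq> 0" "\<forall>i<k. coeff b i = 0"
    using exists_least_iff[of "\<lambda>k. coeff b k \<noteq> 0"] by (auto simp: poly_eq_iff)
  then have "k < m"
    using assms(2) le_degree[of b k] by (auto simp: in_vecs_iff)
  with k assms(1) have "coeff (poly_cutoff m (skew_mult T b e)) k \<noteq> 0"
    by (simp add: coeff_poly_cutoff coeff_skew_mult_lowest iter_eq_0_iff)
  with assms(3) show False
    by simp
qed

lemma degree_dagger:
  assumes "coeff h 0 \<noteq> 0"
  shows "degree (dagger T h) = degree h"
proof (rule antisym)
  show "degree (dagger T h) \<le> degree h"
    by (rule degree_le) (simp add: coeff_dagger)
  show "degree h \<le> degree (dagger T h)"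
    using assms by (intro le_degree) (simp add: coeff_dagger iter_eq_0_iff)
qed

end

lemma coeff_xn_minus_1:
  assumes "0 < n"
  shows "coeff (xn_minus_1 n :: 'a::comm_ring_1 poly) k = (if k = n then 1 else if k = 0 then -1 else 0)"
  using assms by (auto simp: xn_minus_1_def coeff_monom)

lemma degree_xn_minus_1:
  assumes "0 < n"
  shows "degree (xn_minus_1 n :: 'a::comm_ring_1 poly) = n"
  using assms by (intro antisym degree_le le_degree) (auto simp: coeff_xn_minus_1)

lemma xn_minus_1_nonzero:
  assumes "0 < n"
  shows "(xn_minus_1 n :: 'a::comm_ring_1 poly) \<noteq> 0"
  using coeff_xn_minus_1[OF assms, of n] by (metis coeff_0 zero_neq_one)


section \<open>The dual of a skew cyclic code\<close>

locale skew_cyclic_code = field_endo T for T :: "'a::{field,finite} \<Rightarrow> 'a" +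
  fixes n :: nat and h g :: "'a poly"
  assumes n_pos: "0 < n"
    and funpow_n: "T ^^ n = id"
    and factorization: "xn_minus_1 n = skew_mult T h g"
begin

lemma h_nonzero: "h \<noteq> 0" and g_nonzero: "g \<noteq> 0"
  using xn_minus_1_nonzero[OF n_pos] factorization by (auto simp: skew_mult_eq_0_iff)

lemma degree_h_plus_degree_g: "degree h + degree g = n"
  using degree_skew_mult[OF h_nonzero g_nonzero]
  by (simp add: degree_xn_minus_1[OF n_pos] flip: factorization)

lemma skew_mult_g_h: "skew_mult T g h = xn_minus_1 n"
proof -
  have "skew_mult T (skew_mult T g h) g = skew_mult T (xn_minus_1 n) g"
    by (simp add: skew_mult_assoc skew_mult_xn_minus_1_commute[OF funpow_n] flip: factorization)
  then show ?thesis
    using skew_mult_right_cancel[OF g_nonzero] by blast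
qed

lemma coeff_h_0_nonzero: "coeff h 0 \<noteq> 0"
proof -
  have "coeff (skew_mult T h g) 0 = -1"
    using n_pos by (simp add: coeff_xn_minus_1 flip: factorization)
  then have "coeff h 0 * coeff g 0 = -1"
    by (simp add: coeff_skew_mult)
  then show ?thesis
    by auto
qed

lemma degree_dagger_h: "degree (dagger T h) = degree h"
  by (rule degree_dagger[OF coeff_h_0_nonzero])

lemma skew_gen_code_eq: "skew_gen_code T n g = {c \<in> vecs n. \<exists>a. c = skew_mult T a g}"
proof -
  have "skew_mult T a g + skew_mult T b (xn_minus_1 n) = skew_mult T (a + skew_mult T b h) g" for a b
    by (simp add: factorization skew_mult_add_left skew_mult_assoc)
  then show ?thesis
    unfolding skew_gen_code_def by (metis add_0_right skew_mult_0_left)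
qed

lemma multiplier_in_vecs:
  assumes "skew_mult T a g \<in> vecs n"
  shows "a \<in> vecs (degree h)"
proof (cases "a = 0")
  case False
  then have "degree a + degree g < n"
    using assms degree_skew_mult[OF False g_nonzero] by (simp add: in_vecs_iff skew_mult_eq_0_iff g_nonzero)
  then show ?thesis
    using degree_h_plus_degree_g by (simp add: in_vecs_iff)
qed simp

lemma dagger_multiple_in_vecs: "b \<in> vecs (n - degree h) \<Longrightarrow> skew_mult T b (dagger T h) \<in> vecs n"
  using degree_h_plus_degree_g by (intro skew_mult_in_vecs) (auto simp: degree_dagger_h)

lemma generator_multiple_in_vecs: "a \<in> vecs (degree h) \<Longrightarrow> skew_mult T a g \<in> vecs n"
  using degree_h_plus_degree_g by (intro skew_mult_in_vecs) auto

text \<open>The dot product below is T^j applied to the coefficient of x^(deg h + l - j) in g h = x^n - 1,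
  which vanishes since 0 < deg h + l - j < n.\<close>

lemma dagger_monom_multiples_orthogonal:
  assumes l: "l < n - degree h" and j: "j < degree h"
  shows "dot n (skew_mult T (monom 1 l) (dagger T h)) (skew_mult T (monom 1 j) g) = 0"
proof -
  define t where "t = degree h + l - j"
  have t: "0 < t" "t < n"
    using l j degree_h_plus_degree_g by (auto simp: t_def)
  define G where "G k = (if j \<le> k \<and> k \<le> degree h + l then
      (T ^^ j) (coeff g (k - j)) * (T ^^ k) (coeff h (degree h + l - k)) else 0)" for k
  have "coeff (skew_mult T (monom 1 l) (dagger T h)) k * coeff (skew_mult T (monom 1 j) g) k = G k" for k
  proof -
    have "coeff h (degree h + l - k) = 0" if "k < l"
      using that by (intro coeff_eq_0) linarith
    then show ?thesis
      unfolding G_def coeff_skew_mult_monom_left coeff_dagger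
      by (auto simp: iter_zero mult.commute simp flip: funpow_add[THEN fun_cong, unfolded o_apply])
  qed
  then have "dot n (skew_mult T (monom 1 l) (dagger T h)) (skew_mult T (monom 1 j) g) = (\<Sum>k<n. G k)"
    by (simp add: dot_def)
  also have "\<dots> = (\<Sum>k\<in>{j..t + j}. G k)"
    by (rule sum.mono_neutral_right) (use l j degree_h_plus_degree_g in \<open>auto simp: G_def t_def\<close>)
  also have "\<dots> = (\<Sum>m\<le>t. G (m + j))"
    using sum.shift_bounds_cl_nat_ivl[of G 0 j t] by (simp add: atLeast0AtMost)
  also have "\<dots> = (\<Sum>m\<le>t. (T ^^ j) (coeff g m * (T ^^ m) (coeff h (t - m))))"
    using j by (intro sum.cong) (auto simp: G_def t_def iter_mult add.commute
        simp flip: funpow_add[THEN fun_cong, unfolded o_apply])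
  also have "\<dots> = (T ^^ j) (coeff (skew_mult T g h) t)"
    by (simp add: coeff_skew_mult iter_sum)
  also have "\<dots> = 0"
    using t by (simp add: skew_mult_g_h coeff_xn_minus_1[OF n_pos] iter_zero)
  finally show ?thesis .
qed

lemma dagger_multiples_orthogonal:
  assumes "b \<in> vecs (n - degree h)" and "a \<in> vecs (degree h)"
  shows "dot n (skew_mult T b (dagger T h)) (skew_mult T a g) = 0"
proof -
  have "dot n (skew_mult T (\<Sum>l<n - degree h. monom (coeff b l) l) (dagger T h))
      (skew_mult T (\<Sum>j<degree h. monom (coeff a j) j) g) = 0"
    by (simp add: skew_mult_sum_left dot_sum_left dot_sum_right dot_smult_left dot_smult_right
        skew_mult_monom_eq_smult[of "coeff b _"] skew_mult_monom_eq_smult[of "coeff a _"]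
        dagger_monom_multiples_orthogonal)
  then show ?thesis
    using assms by (simp add: sum_monoms_vecs)
qed

lemma dot_generator_monom_multiple:
  assumes "\<forall>i<k. coeff c i = 0" and "k < n" and "degree g \<le> k"
  shows "dot n c (skew_mult T (monom 1 (k - degree g)) g) = coeff c k * (T ^^ (k - degree g)) (lead_coeff g)"
proof -
  let ?j = "k - degree g"
  have "coeff c k' * coeff (skew_mult T (monom 1 ?j) g) k'
      = (if k' = k then coeff c k * (T ^^ ?j) (lead_coeff g) else 0)" for k'
  proof -
    consider "k' < k" | "k' = k" | "k < k'"
      by linarith
    then show ?thesis
    proof cases
      case 3
      then have "coeff g (k' - ?j) = 0"
        using assms(3) by (intro coeff_eq_0) linarith
      with 3 show ?thesis
        by (simp add: coeff_skew_mult_monom_left iter_zero)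
    qed (use assms in \<open>simp_all add: coeff_skew_mult_monom_left\<close>)
  qed
  then show ?thesis
    using assms(2) by (simp add: dot_def)
qed

lemma orthogonal_vanishing_prefix_eq_0:
  assumes c: "c \<in> vecs n"
    and orth: "\<forall>j<degree h. dot n c (skew_mult T (monom 1 j) g) = 0"
    and prefix: "\<forall>k<n - degree h. coeff c k = 0"
  shows "c = 0"
proof -
  have "coeff c k = 0" for k
  proof (induction k rule: less_induct)
    case (less k)
    consider "k < n - degree h" | "n \<le> k" | "n - degree h \<le> k" "k < n"
      by linarith
    then show ?case
    proof cases
      case 3
      then have "k - degree g < degree h" "degree g \<le> k"
        using degree_h_plus_degree_g by linarith+
      then have "coeff c k * (T ^^ (k - degree g)) (lead_coeff g) = 0"
        using orth less.IH dot_generator_monom_multiple[of k c] \<open>k < n\<close> by simp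
      then show ?thesis
        using g_nonzero by (simp add: iter_eq_0_iff)
    qed (use prefix c in \<open>auto simp: vecs_def\<close>)
  qed
  then show ?thesis
    by (simp add: poly_eqI)
qed

lemma cutoff_dagger_multiples_surj:
  assumes "p \<in> vecs (n - degree h)"
  obtains b where "b \<in> vecs (n - degree h)"
    and "poly_cutoff (n - degree h) (skew_mult T b (dagger T h)) = p"
proof -
  let ?m = "n - degree h"
  define \<Phi> where "\<Phi> b = poly_cutoff ?m (skew_mult T b (dagger T h))" for b
  have "inj_on \<Phi> (vecs ?m)"
  proof (rule inj_onI)
    fix b b'
    assume "b \<in> vecs ?m" "b' \<in> vecs ?m" "\<Phi> b = \<Phi> b'"
    have "poly_cutoff ?m (skew_mult T (b - b') (dagger T h)) = \<Phi> b - \<Phi> b'"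
      by (simp add: \<Phi>_def skew_mult_diff_left poly_eq_iff coeff_poly_cutoff)
    moreover have "coeff (dagger T h) 0 \<noteq> 0"
      using h_nonzero by (simp add: coeff_dagger)
    ultimately have "b - b' = 0"
      using \<open>b \<in> vecs ?m\<close> \<open>b' \<in> vecs ?m\<close> \<open>\<Phi> b = \<Phi> b'\<close>
        cutoff_skew_mult_eq_0_imp_eq_0[of "dagger T h" "b - b'" ?m]
      by (simp add: diff_in_vecs)
    then show "b = b'"
      by simp
  qed
  moreover have "\<Phi> ` vecs ?m \<subseteq> vecs ?m"
    by (auto simp: \<Phi>_def poly_cutoff_in_vecs)
  ultimately have "\<Phi> ` vecs ?m = vecs ?m"
    by (rule endo_inj_surj[OF finite_vecs, rotated])
  with assms have "p \<in> \<Phi> ` vecs ?m"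
    by simp
  with that show ?thesis
    unfolding \<Phi>_def by blast
qed

lemma dual_skew_gen_code:
  "dual n (skew_gen_code T n g) = {skew_mult T b (dagger T h) | b. b \<in> vecs (n - degree h)}"
proof (intro set_eqI iffI)
  fix c
  assume "c \<in> {skew_mult T b (dagger T h) | b. b \<in> vecs (n - degree h)}"
  then show "c \<in> dual n (skew_gen_code T n g)"
    by (auto simp: dual_def skew_gen_code_eq dagger_multiple_in_vecs
        dest: multiplier_in_vecs intro: dagger_multiples_orthogonal)
next
  fix c
  assume c: "c \<in> dual n (skew_gen_code T n g)"
  obtain b where b: "b \<in> vecs (n - degree h)"
    and cutoff: "poly_cutoff (n - degree h) (skew_mult T b (dagger T h)) = poly_cutoff (n - degree h) c"
    using cutoff_dagger_multiples_surj[OF poly_cutoff_in_vecs] by blast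
  define d where "d = c - skew_mult T b (dagger T h)"
  have "d = 0"
  proof (rule orthogonal_vanishing_prefix_eq_0)
    show "d \<in> vecs n"
      using c b by (simp add: d_def dual_def diff_in_vecs dagger_multiple_in_vecs)
    show "\<forall>j<degree h. dot n d (skew_mult T (monom 1 j) g) = 0"
    proof (intro allI impI)
      fix j
      assume "j < degree h"
      then have "(monom 1 j :: 'a poly) \<in> vecs (degree h)"
        by (simp add: in_vecs_iff degree_monom_eq)
      moreover from this have "skew_mult T (monom 1 j) g \<in> skew_gen_code T n g"
        by (auto simp: skew_gen_code_eq generator_multiple_in_vecs)
      ultimately show "dot n d (skew_mult T (monom 1 j) g) = 0"
        using c dagger_multiples_orthogonal[OF b] by (simp add: d_def dot_diff_left dual_def)
    qed
    show "\<forall>k<n - degree h. coeff d k = 0"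
    proof (intro allI impI)
      fix k
      assume "k < n - degree h"
      then show "coeff d k = 0"
        using arg_cong[OF cutoff, of "\<lambda>p. coeff p k"] by (simp add: d_def coeff_poly_cutoff)
    qed
  qed
  with b show "c \<in> {skew_mult T b (dagger T h) | b. b \<in> vecs (n - degree h)}"
    by (auto simp: d_def)
qed

lemma right_dvd_dagger_iff:
  "right_dvd T (xn_minus_1 n) (skew_mult T (dagger T h) h) \<longleftrightarrow> (\<exists>a. dagger T h = skew_mult T a g)"
proof -
  have "skew_mult T (dagger T h) h = skew_mult T c (xn_minus_1 n)
      \<longleftrightarrow> dagger T h = skew_mult T c g" for c
    using skew_mult_right_cancel[OF h_nonzero, of "dagger T h" "skew_mult T c g"]
    by (auto simp: skew_mult_assoc skew_mult_g_h)
  then show ?thesis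
    by (simp add: right_dvd_def)
qed

lemma dual_subset_iff_right_dvd:
  "dual n (skew_gen_code T n g) \<subseteq> skew_gen_code T n g \<longleftrightarrow>
     right_dvd T (xn_minus_1 n) (skew_mult T (dagger T h) h)"
proof -
  have "dual n (skew_gen_code T n g) \<subseteq> skew_gen_code T n g \<longleftrightarrow>
      (\<forall>b\<in>vecs (n - degree h). \<exists>a. skew_mult T b (dagger T h) = skew_mult T a g)"
    unfolding dual_skew_gen_code by (auto simp: skew_gen_code_eq dagger_multiple_in_vecs)
  also have "\<dots> \<longleftrightarrow> (\<exists>a. dagger T h = skew_mult T a g)"
  proof (cases "degree h < n")
    case True
    then have "1 \<in> vecs (n - degree h)"
      by (simp add: in_vecs_iff)
    then show ?thesis
      by (metis skew_mult_1_left skew_mult_assoc)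
  next
    case False
    then have "degree g = 0"
      using degree_h_plus_degree_g by simp
    then show ?thesis
      using left_multiple_of_constant[OF _ g_nonzero] False by (auto simp: vecs_0 skew_mult_eq_0_iff)
  qed
  finally show ?thesis
    by (simp add: right_dvd_dagger_iff)
qed

end


lemma field_endo_Theta: "field_endo (Theta i :: 'a::{field,finite} \<Rightarrow> 'a)"
proof
  have "prime CHAR('a)"
    by (rule prime_CHAR_semidom) (rule finite_imp_CHAR_pos, simp)
  then show "Theta i (a + b) = Theta i a + Theta i b" for a b :: 'a
    unfolding Theta_def by (rule freshmans_dream') simp
qed (simp_all add: Theta_def power_mult_distrib)

lemma inj_funpow_period:
  fixes F :: "'a::finite \<Rightarrow> 'a"
  assumes "inj F"
  shows "\<exists>k>0. F ^^ k = id"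
proof -
  have "\<not> inj (\<lambda>k::nat. F ^^ k)"
    using finite_imageD[of "\<lambda>k::nat. F ^^ k" UNIV] by auto
  then obtain j k :: nat where "j < k" "F ^^ j = F ^^ k"
    unfolding inj_def by (metis linorder_neqE_nat)
  have "F ^^ j \<circ> F ^^ (k - j) = F ^^ k"
    using \<open>j < k\<close> by (simp flip: funpow_add)
  also have "\<dots> = F ^^ j \<circ> id"
    using \<open>F ^^ j = F ^^ k\<close> by simp
  finally have "F ^^ (k - j) = id"
    using inj_eq[OF inj_fn[OF assms, of j]] by (simp add: fun_eq_iff)
  with \<open>j < k\<close> show ?thesis
    by (intro exI[of _ "k - j"]) simp
qed

lemma funpow_eq_id_if_aut_ord_dvd:
  assumes "\<exists>k>0. F ^^ k = id" and "aut_ord F dvd m"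
  shows "F ^^ m = id"
proof -
  have "F ^^ aut_ord F = id"
    unfolding aut_ord_def using LeastI_ex[OF assms(1)] by blast
  with assms(2) show ?thesis
    by (metis dvdE funpow_mult id_funpow)
qed

lemma thetaR_funpow: "thetaR F ^^ k = thetaR (F ^^ k)"
  by (induction k) (auto simp: thetaR_def fun_eq_iff rq_eq_iff)

lemma thetaR_eq_id_iff: "thetaR F = id \<longleftrightarrow> F = id"
proof
  assume "thetaR F = id"
  then have "thetaR F (RQ a a) = RQ a a" for a
    by simp
  then show "F = id"
    by (auto simp: thetaR_def fun_eq_iff)
qed (auto simp: thetaR_def fun_eq_iff rq_eq_iff)

lemma aut_ord_thetaR: "aut_ord (thetaR F) = aut_ord F"
  by (simp add: aut_ord_def thetaR_funpow thetaR_eq_id_iff)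


section \<open>Splitting the dual of a mixed code\<close>

lemma tensor_eq_Times: "tensor A B = A \<times> B"
  by (auto simp: tensor_def)

lemma FqR_inner_eq:
  "FqR_inner a b (x, y) (x', y') = RQ 0 (dot a x x') + dot b y y'"
  by (simp add: FqR_inner_def dot_def u_R_def emb_R_def times_rq_def)

lemma FqR_dual_Times:
  assumes "0 \<in> A" and "0 \<in> B"
  shows "FqR_dual a b (A \<times> B) = dual a A \<times> dual b B"
proof -
  have "(x, y) \<in> FqR_dual a b (A \<times> B) \<longleftrightarrow> x \<in> dual a A \<and> y \<in> dual b B" for x y
  proof
    assume xy: "(x, y) \<in> FqR_dual a b (A \<times> B)"
    have "RQ 0 (dot a x x') = 0" if "x' \<in> A" for x'
      using xy that assms FqR_inner_eq[of a b x y x' 0] by (auto simp: FqR_dual_def dot_def)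
    moreover have "dot b y y' = 0" if "y' \<in> B" for y'
      using xy that assms FqR_inner_eq[of a b x y 0 y']
      by (auto simp: FqR_dual_def dot_def zero_rq_def)
    ultimately show "x \<in> dual a A \<and> y \<in> dual b B"
      using xy by (auto simp: FqR_dual_def amb_def dual_def zero_rq_def)
  next
    assume "x \<in> dual a A \<and> y \<in> dual b B"
    then show "(x, y) \<in> FqR_dual a b (A \<times> B)"
      by (auto simp: FqR_dual_def amb_def dual_def FqR_inner_eq zero_rq_def)
  qed
  then show ?thesis
    by auto
qed

text \<open>R \<cong> F_q \<times> F_q via a + u b \<mapsto> (a, a + b); under this isomorphism xi1 and xi2 are the
  idempotents (1, 0) and (0, 1).\<close>

definition xi1_part :: "'a::comm_ring_1 rq poly \<Rightarrow> 'a poly" where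
  "xi1_part y = map_poly rq_fst y"

definition xi2_part :: "'a::comm_ring_1 rq poly \<Rightarrow> 'a poly" where
  "xi2_part y = map_poly (\<lambda>r. rq_fst r + rq_snd r) y"

definition xi_comb :: "'a::comm_ring_1 poly \<Rightarrow> 'a poly \<Rightarrow> 'a rq poly" where
  "xi_comb c1 c2 = smult xi1 (map_poly emb_R c1) + smult xi2 (map_poly emb_R c2)"

lemma coeff_xi_comb: "coeff (xi_comb c1 c2) k = RQ (coeff c1 k) (coeff c2 k - coeff c1 k)"
  by (simp add: xi_comb_def coeff_map_poly xi1_def xi2_def u_R_def emb_R_def zero_rq_def
      one_rq_def minus_rq_def times_rq_def plus_rq_def)

lemma coeff_xi1_part: "coeff (xi1_part y) k = rq_fst (coeff y k)"
  by (simp add: xi1_part_def coeff_map_poly zero_rq_def)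

lemma coeff_xi2_part: "coeff (xi2_part y) k = rq_fst (coeff y k) + rq_snd (coeff y k)"
  by (simp add: xi2_part_def coeff_map_poly zero_rq_def)

lemma xi1_part_xi_comb [simp]: "xi1_part (xi_comb c1 c2) = c1"
  by (rule poly_eqI) (simp add: coeff_xi1_part coeff_xi_comb)

lemma xi2_part_xi_comb [simp]: "xi2_part (xi_comb c1 c2) = c2"
  by (rule poly_eqI) (simp add: coeff_xi2_part coeff_xi_comb)

lemma xi_comb_parts: "xi_comb (xi1_part y) (xi2_part y) = y"
  by (rule poly_eqI) (simp add: coeff_xi1_part coeff_xi2_part coeff_xi_comb rq_eq_iff)

lemma in_xi_sum_iff: "y \<in> xi_sum C1 C2 \<longleftrightarrow> xi1_part y \<in> C1 \<and> xi2_part y \<in> C2"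
proof
  assume "xi1_part y \<in> C1 \<and> xi2_part y \<in> C2"
  then have "xi_comb (xi1_part y) (xi2_part y) \<in> xi_sum C1 C2"
    by (auto simp: xi_sum_def xi_comb_def)
  then show "y \<in> xi_sum C1 C2"
    by (simp add: xi_comb_parts)
qed (auto simp: xi_sum_def simp flip: xi_comb_def)

lemma xi_sum_subset_iff:
  assumes "C1 \<noteq> {}" and "C2 \<noteq> {}"
  shows "xi_sum C1 C2 \<subseteq> xi_sum D1 D2 \<longleftrightarrow> C1 \<subseteq> D1 \<and> C2 \<subseteq> D2"
proof
  assume sub: "xi_sum C1 C2 \<subseteq> xi_sum D1 D2"
  obtain c1 c2 where "c1 \<in> C1" "c2 \<in> C2"
    using assms by blast
  have "x \<in> D1" if "x \<in> C1" for x
    using subsetD[OF sub, of "xi_comb x c2"] that \<open>c2 \<in> C2\<close> by (simp add: in_xi_sum_iff)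
  moreover have "y \<in> D2" if "y \<in> C2" for y
    using subsetD[OF sub, of "xi_comb c1 y"] that \<open>c1 \<in> C1\<close> by (simp add: in_xi_sum_iff)
  ultimately show "C1 \<subseteq> D1 \<and> C2 \<subseteq> D2"
    by blast
qed (auto simp: in_xi_sum_iff)

lemma zero_in_xi_sum: "0 \<in> C1 \<Longrightarrow> 0 \<in> C2 \<Longrightarrow> 0 \<in> xi_sum C1 C2"
  by (simp add: in_xi_sum_iff xi1_part_def xi2_part_def)

lemma in_vecs_iff_parts: "y \<in> vecs n \<longleftrightarrow> xi1_part y \<in> vecs n \<and> xi2_part y \<in> vecs n"
  by (auto simp: vecs_def coeff_xi1_part coeff_xi2_part rq_eq_iff zero_rq_def)

lemma dot_eq_0_iff_parts:
  "dot n y y' = 0 \<longleftrightarrow> dot n (xi1_part y) (xi1_part y') = 0 \<and> dot n (xi2_part y) (xi2_part y') = 0"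
proof -
  have fst_sum: "rq_fst (sum F A) = (\<Sum>x\<in>A. rq_fst (F x))"
    and snd_sum: "rq_snd (sum F A) = (\<Sum>x\<in>A. rq_snd (F x))" for F :: "nat \<Rightarrow> 'a rq" and A
    by (induction A rule: infinite_finite_induct) (simp_all add: zero_rq_def plus_rq_def)
  have "rq_fst (dot n y y') = dot n (xi1_part y) (xi1_part y')"
    by (simp add: fst_sum dot_def coeff_xi1_part times_rq_def)
  moreover have "rq_fst (dot n y y') + rq_snd (dot n y y') = dot n (xi2_part y) (xi2_part y')"
    by (simp add: fst_sum snd_sum dot_def coeff_xi2_part times_rq_def algebra_simps
        flip: sum.distrib)
  ultimately show ?thesis
    by (auto simp: rq_eq_iff zero_rq_def)
qed

lemma dual_xi_sum:
  assumes "0 \<in> C1" and "0 \<in> C2"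
  shows "dual n (xi_sum C1 C2) = xi_sum (dual n C1) (dual n C2)"
proof (intro set_eqI iffI)
  fix y
  assume y: "y \<in> dual n (xi_sum C1 C2)"
  have "dot n (xi1_part y) c1 = 0" if "c1 \<in> C1" for c1
    using y that assms dot_eq_0_iff_parts[of n y "xi_comb c1 0"]
    by (auto simp: dual_def in_xi_sum_iff)
  moreover have "dot n (xi2_part y) c2 = 0" if "c2 \<in> C2" for c2
    using y that assms dot_eq_0_iff_parts[of n y "xi_comb 0 c2"]
    by (auto simp: dual_def in_xi_sum_iff)
  ultimately show "y \<in> xi_sum (dual n C1) (dual n C2)"
    using y by (auto simp: dual_def in_xi_sum_iff in_vecs_iff_parts)
qed (auto simp: dual_def in_xi_sum_iff in_vecs_iff_parts dot_eq_0_iff_parts)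


lemma FqR_dual_subset_iff:
  assumes "0 \<in> A" and "0 \<in> C1" and "0 \<in> C2"
  shows "FqR_dual a b (tensor A (xi_sum C1 C2)) \<subseteq> tensor A (xi_sum C1 C2) \<longleftrightarrow>
    dual a A \<subseteq> A \<and> dual b C1 \<subseteq> C1 \<and> dual b C2 \<subseteq> C2"
proof -
  have "FqR_dual a b (tensor A (xi_sum C1 C2)) = dual a A \<times> xi_sum (dual b C1) (dual b C2)"
    using assms by (simp add: tensor_eq_Times FqR_dual_Times zero_in_xi_sum dual_xi_sum)
  moreover have "dual a A \<noteq> {}" "dual b C1 \<noteq> {}" "dual b C2 \<noteq> {}"
    "xi_sum (dual b C1) (dual b C2) \<noteq> {}"
    using zero_in_dual zero_in_xi_sum[OF zero_in_dual zero_in_dual] by blast+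
  ultimately show ?thesis
    by (simp add: tensor_eq_Times times_subset_iff xi_sum_subset_iff)
qed

theorem theorem11:
  fixes i \<alpha> \<beta> :: nat
    and f h g1 g2 h1 h2 :: "'a::{field,finite} poly"
    and g :: "'a rq poly"
    and C' C1 C2 :: "'a poly set"
    and CR :: "'a rq poly set"
    and C :: "('a poly \<times> 'a rq poly) set"
  assumes "0 < \<alpha>" and "0 < \<beta>"
    and "aut_ord (Theta i :: 'a \<Rightarrow> 'a) dvd \<alpha>"
    and "aut_ord (thetaR (Theta i :: 'a \<Rightarrow> 'a)) dvd \<beta>"
    and "C' = skew_gen_code (Theta i) \<alpha> f"
    and "C1 = skew_gen_code (Theta i) \<beta> g1"
    and "C2 = skew_gen_code (Theta i) \<beta> g2"
    and "g = smult xi1 (map_poly emb_R g1) + smult xi2 (map_poly emb_R g2)"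
    and "CR = xi_sum C1 C2"
    and "CR = skew_gen_code (thetaR (Theta i)) \<beta> g"
    and "C = tensor C' CR"
    and "FqR_skew_cyclic (Theta i) \<alpha> \<beta> C"
    and "xn_minus_1 \<alpha> = skew_mult (Theta i) h f"
    and "xn_minus_1 \<beta> = skew_mult (Theta i) h1 g1"
    and "xn_minus_1 \<beta> = skew_mult (Theta i) h2 g2"
  shows "FqR_dual \<alpha> \<beta> C \<subseteq> C \<longleftrightarrow>
           right_dvd (Theta i) (xn_minus_1 \<alpha>) (skew_mult (Theta i) (dagger (Theta i) h) h) \<and>
           right_dvd (Theta i) (xn_minus_1 \<beta>) (skew_mult (Theta i) (dagger (Theta i) h1) h1) \<and>
           right_dvd (Theta i) (xn_minus_1 \<beta>) (skew_mult (Theta i) (dagger (Theta i) h2) h2)"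
proof -
  interpret field_endo "Theta i :: 'a \<Rightarrow> 'a"
    by (rule field_endo_Theta)
  have period: "\<exists>k>0. (Theta i :: 'a \<Rightarrow> 'a) ^^ k = id"
    by (rule inj_funpow_period[OF inj])
  have "(Theta i :: 'a \<Rightarrow> 'a) ^^ \<alpha> = id" "(Theta i :: 'a \<Rightarrow> 'a) ^^ \<beta> = id"
    using assms(3,4) by (simp_all add: funpow_eq_id_if_aut_ord_dvd[OF period] aut_ord_thetaR)
  then interpret A: skew_cyclic_code "Theta i" \<alpha> h f
    + B1: skew_cyclic_code "Theta i" \<beta> h1 g1
    + B2: skew_cyclic_code "Theta i" \<beta> h2 g2
    using assms by unfold_locales auto
  show ?thesis
    using FqR_dual_subset_iff[of C' C1 C2 \<alpha> \<beta>] zero_in_skew_gen_code assms(5-7,9,11)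
      A.dual_subset_iff_right_dvd B1.dual_subset_iff_right_dvd B2.dual_subset_iff_right_dvd
    by simp
qed

end
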